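(* Let $A$ be a metabelian Lie $U$-algebra over a field $k$ and let $A_\Delta$ be its $\Delta$-localisation. Then every finitely generated subalgebra $B$ of $A_\Delta$ embeds into $A$ (is isomorphic to a subalgebra of $A$).
   Context: A Lie algebra is metabelian if $(a\circ b)\circ(c\circ d)=0$ identically; $\mathrm{Fit}(A)$ is the ideal generated by all elements lying in nilpotent ideals. A metabelian Lie algebra $A$ is a $U$-algebra if $\mathrm{Fit}(A)$ is abelian and torsion-free as a module over $R=k[x_\alpha:\alpha\in\Lambda]$, where $\{z_\alpha:\alpha\in\Lambda\}\subseteq A$ is a family whose images form a basis of $A/\mathrm{Fit}(A)$ and $b\cdot x_\alpha=b\circ z_\alpha$ for $b\in\mathrm{Fit}(A)$ (extended multiplicatively and linearly). $\Delta$-localisation: let $V$ be the $k$-span of $\{z_\alpha\}$, $\Delta$ the ideal of $R$ generated by all $x_\alpha$, $R_\Delta$ the localisation of $R$ at $\Delta$, $\mathrm{Fit}_\Delta(A)=R_\Delta\otimes_R\mathrm{Fit}(A)\supseteq\mathrm{Fit}(A)$. $A_\Delta$ is the $k$-space $V\oplus\mathrm{Fit}_\Delta(A)$ with bracket: for $v,w\in V$, $v\circ w$ is the product in $A$; products of two elements of $\mathrm{Fit}_\Delta(A)$ are $0$; $u\circ z_\alpha=u\cdot x_\alpha=-z_\alpha\circ u$ for $u\in\mathrm{Fit}_\Delta(A)$; extended bilinearly. It is a metabelian Lie algebra containing $A$ as a subalgebra. *)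

theory Defs
  imports Main "HOL.Vector_Spaces" "HOL-Library.Poly_Mapping"
begin

definition lie_algebra :: "('k::field \<Rightarrow> 'a::ab_group_add \<Rightarrow> 'a) \<Rightarrow> ('a \<Rightarrow> 'a \<Rightarrow> 'a) \<Rightarrow> bool" where
  "lie_algebra scale br \<longleftrightarrow> vector_space scale
     \<and> (\<forall>x y w. br (x + y) w = br x w + br y w)
     \<and> (\<forall>x y w. br w (x + y) = br w x + br w y)
     \<and> (\<forall>c x y. br (scale c x) y = scale c (br x y))
     \<and> (\<forall>c x y. br x (scale c y) = scale c (br x y))
     \<and> (\<forall>x. br x x = 0)
     \<and> (\<forall>x y w. br x (br y w) + br y (br w x) + br w (br x y) = 0)"

definition metabelian :: "('a::ab_group_add \<Rightarrow> 'a \<Rightarrow> 'a) \<Rightarrow> bool" where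
  "metabelian br \<longleftrightarrow> (\<forall>a b c d. br (br a b) (br c d) = 0)"

definition lie_ideal :: "('k::field \<Rightarrow> 'a::ab_group_add \<Rightarrow> 'a) \<Rightarrow> ('a \<Rightarrow> 'a \<Rightarrow> 'a) \<Rightarrow> 'a set \<Rightarrow> bool" where
  "lie_ideal scale br I \<longleftrightarrow> module.subspace scale I \<and> (\<forall>a x. x \<in> I \<longrightarrow> br a x \<in> I)"

text \<open>Lower central series of an ideal I (viewed as a Lie algebra): I^1 = I, I^(n+1) = [I^n, I].\<close>
fun lcs :: "('k::field \<Rightarrow> 'a::ab_group_add \<Rightarrow> 'a) \<Rightarrow> ('a \<Rightarrow> 'a \<Rightarrow> 'a) \<Rightarrow> 'a set \<Rightarrow> nat \<Rightarrow> 'a set" where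
  "lcs scale br I 0 = I"
| "lcs scale br I (Suc n) = module.span scale {br x y | x y. x \<in> lcs scale br I n \<and> y \<in> I}"

definition nilpotent_ideal :: "('k::field \<Rightarrow> 'a::ab_group_add \<Rightarrow> 'a) \<Rightarrow> ('a \<Rightarrow> 'a \<Rightarrow> 'a) \<Rightarrow> 'a set \<Rightarrow> bool" where
  "nilpotent_ideal scale br I \<longleftrightarrow> lie_ideal scale br I \<and> (\<exists>n. lcs scale br I n = {0})"

definition Fit :: "('k::field \<Rightarrow> 'a::ab_group_add \<Rightarrow> 'a) \<Rightarrow> ('a \<Rightarrow> 'a \<Rightarrow> 'a) \<Rightarrow> 'a set" where
  "Fit scale br = \<Inter>{J. lie_ideal scale br J \<and> \<Union>{I. nilpotent_ideal scale br I} \<subseteq> J}"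

section \<open>The polynomial ring R = k[x_alpha : alpha in Lam]\<close>

type_synonym ('l, 'k) mpoly = "('l \<Rightarrow>\<^sub>0 nat) \<Rightarrow>\<^sub>0 'k"

definition Var :: "'l \<Rightarrow> ('l, 'k::field) mpoly" where
  "Var \<alpha> = Poly_Mapping.single (Poly_Mapping.single \<alpha> 1) 1"

definition Const :: "'k::field \<Rightarrow> ('l, 'k) mpoly" where
  "Const c = Poly_Mapping.single 0 c"

definition polyR :: "'l set \<Rightarrow> ('l, 'k::field) mpoly set" where
  "polyR Lam = {p. \<forall>m. m \<in> Poly_Mapping.keys p \<longrightarrow> Poly_Mapping.keys m \<subseteq> Lam}"

definition Delta :: "'l set \<Rightarrow> ('l, 'k::field) mpoly set" where
  "Delta Lam = {p. \<exists>F r. finite F \<and> F \<subseteq> Lam \<and> (\<forall>\<alpha>\<in>F. r \<alpha> \<in> polyR Lam) \<and> p = (\<Sum>\<alpha>\<in>F. r \<alpha> * Var \<alpha>)}"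

definition multS :: "'l set \<Rightarrow> ('l, 'k::field) mpoly set" where
  "multS Lam = polyR Lam - Delta Lam"

text \<open>Elements of V = span{z_alpha} are given by their (finitely supported) coordinates.\<close>
definition zsum :: "('k::field \<Rightarrow> 'a::ab_group_add \<Rightarrow> 'a) \<Rightarrow> ('l \<Rightarrow> 'a) \<Rightarrow> ('l \<Rightarrow>\<^sub>0 'k) \<Rightarrow> 'a" where
  "zsum scale z c = (\<Sum>\<alpha>\<in>Poly_Mapping.keys c. scale (Poly_Mapping.lookup c \<alpha>) (z \<alpha>))"

text \<open>The images of z_alpha (alpha in Lam) form a basis of A/Fit(A).\<close>
definition fit_basis :: "('k::field \<Rightarrow> 'a::ab_group_add \<Rightarrow> 'a) \<Rightarrow> ('a \<Rightarrow> 'a \<Rightarrow> 'a) \<Rightarrow> 'l set \<Rightarrow> ('l \<Rightarrow> 'a) \<Rightarrow> bool" where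
  "fit_basis scale br Lam z \<longleftrightarrow>
     (\<forall>c. Poly_Mapping.keys c \<subseteq> Lam \<longrightarrow> zsum scale z c \<in> Fit scale br \<longrightarrow> c = 0)
   \<and> (\<forall>a. \<exists>c. Poly_Mapping.keys c \<subseteq> Lam \<and> a - zsum scale z c \<in> Fit scale br)"

text \<open>act is the R-module structure on Fit(A) with b . x_alpha = b o z_alpha,
  extended multiplicatively and linearly (this determines act uniquely).\<close>
definition R_action :: "('k::field \<Rightarrow> 'a::ab_group_add \<Rightarrow> 'a) \<Rightarrow> ('a \<Rightarrow> 'a \<Rightarrow> 'a) \<Rightarrow> 'l set \<Rightarrow> ('l \<Rightarrow> 'a)
     \<Rightarrow> (('l, 'k) mpoly \<Rightarrow> 'a \<Rightarrow> 'a) \<Rightarrow> bool" where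
  "R_action scale br Lam z act \<longleftrightarrow>
     (\<forall>p\<in>polyR Lam. \<forall>b\<in>Fit scale br. act p b \<in> Fit scale br)
   \<and> (\<forall>p\<in>polyR Lam. \<forall>b\<in>Fit scale br. \<forall>b'\<in>Fit scale br. act p (b + b') = act p b + act p b')
   \<and> (\<forall>p\<in>polyR Lam. \<forall>q\<in>polyR Lam. \<forall>b\<in>Fit scale br. act (p + q) b = act p b + act q b)
   \<and> (\<forall>p\<in>polyR Lam. \<forall>q\<in>polyR Lam. \<forall>b\<in>Fit scale br. act (p * q) b = act p (act q b))
   \<and> (\<forall>c. \<forall>b\<in>Fit scale br. act (Const c) b = scale c b)
   \<and> (\<forall>\<alpha>\<in>Lam. \<forall>b\<in>Fit scale br. act (Var \<alpha>) b = br b (z \<alpha>))"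

definition U_algebra :: "('k::field \<Rightarrow> 'a::ab_group_add \<Rightarrow> 'a) \<Rightarrow> ('a \<Rightarrow> 'a \<Rightarrow> 'a) \<Rightarrow> 'l set \<Rightarrow> ('l \<Rightarrow> 'a)
     \<Rightarrow> (('l, 'k) mpoly \<Rightarrow> 'a \<Rightarrow> 'a) \<Rightarrow> bool" where
  "U_algebra scale br Lam z act \<longleftrightarrow>
     lie_algebra scale br \<and> metabelian br \<and> fit_basis scale br Lam z \<and> R_action scale br Lam z act
   \<and> (\<forall>b\<in>Fit scale br. \<forall>b'\<in>Fit scale br. br b b' = 0)
   \<and> (\<forall>p\<in>polyR Lam. \<forall>b\<in>Fit scale br. p \<noteq> 0 \<longrightarrow> act p b = 0 \<longrightarrow> b = 0)"

text \<open>Fit_Delta(A) = R_Delta \<otimes>_R Fit(A), realised as the module of fractions u/s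
  (u in Fit(A), s in R - Delta) modulo (u,s) ~ (u',s') iff t(s'u - su') = 0 for some t in R - Delta.\<close>
definition frac :: "('k::field \<Rightarrow> 'a::ab_group_add \<Rightarrow> 'a) \<Rightarrow> ('a \<Rightarrow> 'a \<Rightarrow> 'a) \<Rightarrow> 'l set
     \<Rightarrow> (('l, 'k) mpoly \<Rightarrow> 'a \<Rightarrow> 'a) \<Rightarrow> 'a \<Rightarrow> ('l, 'k) mpoly \<Rightarrow> ('a \<times> ('l, 'k) mpoly) set" where
  "frac scale br Lam act u s = {(u', s'). u' \<in> Fit scale br \<and> s' \<in> multS Lam
      \<and> (\<exists>t\<in>multS Lam. act t (act s' u - act s u') = 0)}"

definition FitD :: "('k::field \<Rightarrow> 'a::ab_group_add \<Rightarrow> 'a) \<Rightarrow> ('a \<Rightarrow> 'a \<Rightarrow> 'a) \<Rightarrow> 'l set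
     \<Rightarrow> (('l, 'k) mpoly \<Rightarrow> 'a \<Rightarrow> 'a) \<Rightarrow> ('a \<times> ('l, 'k) mpoly) set set" where
  "FitD scale br Lam act = {frac scale br Lam act u s | u s. u \<in> Fit scale br \<and> s \<in> multS Lam}"

definition fadd where
  "fadd scale br Lam act \<phi> \<psi> = \<Union>{frac scale br Lam act (act s' u + act s u') (s * s') | u s u' s'.
       (u, s) \<in> \<phi> \<and> (u', s') \<in> \<psi>}"

definition fmul where
  "fmul scale br Lam act p \<phi> = \<Union>{frac scale br Lam act (act p u) s | u s. (u, s) \<in> \<phi>}"

definition fscale where
  "fscale scale br Lam act c \<phi> = \<Union>{frac scale br Lam act (scale c u) s | u s. (u, s) \<in> \<phi>}"

text \<open>A_Delta = V \<oplus> Fit_Delta(A); V-component given by coordinates w.r.t. z.\<close>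
definition AD_carrier where
  "AD_carrier scale br Lam act = {c. Poly_Mapping.keys c \<subseteq> Lam} \<times> FitD scale br Lam act"

definition AD_zero where
  "AD_zero scale br Lam act = (0, frac scale br Lam act 0 1)"

definition AD_add where
  "AD_add scale br Lam act x y = (fst x + fst y, fadd scale br Lam act (snd x) (snd y))"

definition AD_scale where
  "AD_scale scale br Lam act c x = (Poly_Mapping.map (\<lambda>a. c * a) (fst x), fscale scale br Lam act c (snd x))"

definition coordV where
  "coordV scale br Lam z a = (THE c. Poly_Mapping.keys c \<subseteq> Lam \<and> a - zsum scale z c \<in> Fit scale br)"

definition inclA where
  "inclA scale br Lam z act a =
     (coordV scale br Lam z a, frac scale br Lam act (a - zsum scale z (coordV scale br Lam z a)) 1)"

text \<open>The linear polynomial sum c_alpha x_alpha attached to v = sum c_alpha z_alpha, so that u o v = u . lin v.\<close>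
definition lin :: "('l \<Rightarrow>\<^sub>0 'k::field) \<Rightarrow> ('l, 'k) mpoly" where
  "lin c = (\<Sum>\<alpha>\<in>Poly_Mapping.keys c. Const (Poly_Mapping.lookup c \<alpha>) * Var \<alpha>)"

definition AD_br where
  "AD_br scale br Lam z act x y =
     AD_add scale br Lam act (inclA scale br Lam z act (br (zsum scale z (fst x)) (zsum scale z (fst y))))
       (0, fadd scale br Lam act (fmul scale br Lam act (lin (fst y)) (snd x))
                                 (fmul scale br Lam act (- lin (fst x)) (snd y)))"

inductive_set AD_gen for scale :: "'k::field \<Rightarrow> 'a::ab_group_add \<Rightarrow> 'a" and br Lam z act G where
  gen: "x \<in> G \<Longrightarrow> x \<in> AD_gen scale br Lam z act G"
| zero: "AD_zero scale br Lam act \<in> AD_gen scale br Lam z act G"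
| add: "x \<in> AD_gen scale br Lam z act G \<Longrightarrow> y \<in> AD_gen scale br Lam z act G
          \<Longrightarrow> AD_add scale br Lam act x y \<in> AD_gen scale br Lam z act G"
| smult: "x \<in> AD_gen scale br Lam z act G \<Longrightarrow> AD_scale scale br Lam act c x \<in> AD_gen scale br Lam z act G"
| bracket: "x \<in> AD_gen scale br Lam z act G \<Longrightarrow> y \<in> AD_gen scale br Lam z act G
          \<Longrightarrow> AD_br scale br Lam z act x y \<in> AD_gen scale br Lam z act G"

definition AD_fg_subalgebra where
  "AD_fg_subalgebra scale br Lam z act B \<longleftrightarrow>
     (\<exists>G. finite G \<and> G \<subseteq> AD_carrier scale br Lam act \<and> B = AD_gen scale br Lam z act G)"

definition AD_embeds where
  "AD_embeds scale br Lam z act B \<longleftrightarrow>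
     (\<exists>f. inj_on f B
        \<and> (\<forall>x\<in>B. \<forall>y\<in>B. f (AD_add scale br Lam act x y) = f x + f y)
        \<and> (\<forall>c. \<forall>x\<in>B. f (AD_scale scale br Lam act c x) = scale c (f x))
        \<and> (\<forall>x\<in>B. \<forall>y\<in>B. f (AD_br scale br Lam z act x y) = br (f x) (f y)))"

end

theory Submission
  imports Defs
begin

text \<open>Put the finitely many generators of B over a common denominator s \<in> R - \<Delta>, normalised
  to constant term 1, so s = 1 + \<Sum> r_\<alpha> x_\<alpha>. Multiplication by s maps B into A: it sends u/s
  to u and v \<in> V to v + (s - 1)v, where (s - 1)v = \<Sum> r_\<alpha> [v, z_\<alpha>] lies in Fit(A). By Jacobi,
  s - 1 acts as a derivation on brackets of elements of V, and Fit(A) is abelian, so this map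
  respects brackets; it is injective because V meets Fit(A) trivially and Fit(A) is torsion-free.\<close>

lemma lookup_Const: "Poly_Mapping.lookup (Const c) m = (if m = 0 then c else 0)"
  by (simp add: Const_def lookup_single when_def)
lemma Const_0[simp]: "Const 0 = 0" by (simp add: Const_def)
lemma Const_1[simp]: "Const 1 = 1" by (simp add: Const_def)
lemma Const_mult: "Const a * Const b = Const (a * b)" by (simp add: Const_def mult_single)
lemma lookup_Const_mult: "Poly_Mapping.lookup (Const c * p) m = c * Poly_Mapping.lookup p m"
proof -
  have "Const c * p = Poly_Mapping.map ((*) c) p"
    by (simp add: Const_def mult_map_scale_conv_mult)
  then show ?thesis by (simp add: Poly_Mapping.map.rep_eq when_def)
qed

lemma polyR_iff: "p \<in> polyR Lam \<longleftrightarrow> (\<forall>m\<in>Poly_Mapping.keys p. Poly_Mapping.keys m \<subseteq> Lam)"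
  by (auto simp: polyR_def)
lemma polyR_0[simp]: "0 \<in> polyR Lam" by (simp add: polyR_iff)
lemma polyR_add: "p \<in> polyR Lam \<Longrightarrow> q \<in> polyR Lam \<Longrightarrow> p + q \<in> polyR Lam"
  using keys_add[of p q] by (auto simp: polyR_iff)
lemma polyR_uminus: "p \<in> polyR Lam \<Longrightarrow> - p \<in> polyR Lam"
  by (simp add: polyR_iff)
lemma polyR_diff: "p \<in> polyR Lam \<Longrightarrow> q \<in> polyR Lam \<Longrightarrow> p - q \<in> polyR Lam"
  unfolding diff_conv_add_uminus by (intro polyR_add polyR_uminus)
lemma polyR_mult: "p \<in> polyR Lam \<Longrightarrow> q \<in> polyR Lam \<Longrightarrow> p * q \<in> polyR Lam"
  unfolding polyR_iff
proof
  fix m assume p: "\<forall>m\<in>Poly_Mapping.keys p. Poly_Mapping.keys m \<subseteq> Lam"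
    and q: "\<forall>m\<in>Poly_Mapping.keys q. Poly_Mapping.keys m \<subseteq> Lam"
    and m: "m \<in> Poly_Mapping.keys (p * q)"
  then obtain a b where "m = a + b" "a \<in> Poly_Mapping.keys p" "b \<in> Poly_Mapping.keys q"
    using keys_mult[of p q] by blast
  then show "Poly_Mapping.keys m \<subseteq> Lam" using p q keys_add[of a b] by blast
qed
lemma polyR_Const: "Const c \<in> polyR Lam"
  by (simp add: polyR_iff Const_def)
lemma polyR_1[simp]: "1 \<in> polyR Lam"
  using polyR_Const[of 1] by simp
lemma polyR_Var: "\<alpha> \<in> Lam \<Longrightarrow> Var \<alpha> \<in> polyR Lam"
  by (simp add: polyR_iff Var_def)
lemma polyR_sum: "(\<And>i. i \<in> I \<Longrightarrow> f i \<in> polyR Lam) \<Longrightarrow> sum f I \<in> polyR Lam"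
  by (induct I rule: infinite_finite_induct) (simp_all add: polyR_add)

lemma DeltaI: "finite F \<Longrightarrow> F \<subseteq> Lam \<Longrightarrow> (\<forall>\<alpha>\<in>F. r \<alpha> \<in> polyR Lam) \<Longrightarrow> p = (\<Sum>\<alpha>\<in>F. r \<alpha> * Var \<alpha>) \<Longrightarrow> p \<in> Delta Lam"
  unfolding Delta_def by blast
lemma Delta_0[simp]: "0 \<in> Delta Lam"
  unfolding Delta_def by (rule CollectI, rule exI[of _ "{}"]) simp
lemma Delta_Var: "\<alpha> \<in> Lam \<Longrightarrow> r \<in> polyR Lam \<Longrightarrow> r * Var \<alpha> \<in> Delta Lam"
  unfolding Delta_def by (rule CollectI, rule exI[of _ "{\<alpha>}"], rule exI[of _ "\<lambda>_. r"]) simp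
lemma Delta_add: assumes "p \<in> Delta Lam" "q \<in> Delta Lam" shows "p + q \<in> Delta Lam"
proof -
  obtain F r where F: "finite F" "F \<subseteq> Lam" "\<forall>\<alpha>\<in>F. r \<alpha> \<in> polyR Lam" "p = (\<Sum>\<alpha>\<in>F. r \<alpha> * Var \<alpha>)"
    using assms(1) unfolding Delta_def by blast
  obtain G s where G: "finite G" "G \<subseteq> Lam" "\<forall>\<alpha>\<in>G. s \<alpha> \<in> polyR Lam" "q = (\<Sum>\<alpha>\<in>G. s \<alpha> * Var \<alpha>)"
    using assms(2) unfolding Delta_def by blast
  define r' where "r' \<alpha> = (if \<alpha> \<in> F then r \<alpha> else 0)" for \<alpha>
  define s' where "s' \<alpha> = (if \<alpha> \<in> G then s \<alpha> else 0)" for \<alpha>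
  have "p = (\<Sum>\<alpha>\<in>F \<union> G. r' \<alpha> * Var \<alpha>)"
    unfolding F(4) r'_def by (rule sum.mono_neutral_cong_right[symmetric]) (use F(1) G(1) in auto)
  moreover have "q = (\<Sum>\<alpha>\<in>F \<union> G. s' \<alpha> * Var \<alpha>)"
    unfolding G(4) s'_def by (rule sum.mono_neutral_cong_right[symmetric]) (use F(1) G(1) in auto)
  ultimately have "p + q = (\<Sum>\<alpha>\<in>F \<union> G. (r' \<alpha> + s' \<alpha>) * Var \<alpha>)"
    by (simp add: sum.distrib distrib_right)
  moreover have "\<forall>\<alpha>\<in>F \<union> G. r' \<alpha> + s' \<alpha> \<in> polyR Lam"
    using F(3) G(3) by (auto intro: polyR_add simp: r'_def s'_def)
  ultimately show ?thesis using F G by (intro DeltaI[of "F \<union> G"]) auto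
qed

lemma Delta_mult: assumes "q \<in> polyR Lam" "p \<in> Delta Lam" shows "q * p \<in> Delta Lam"
proof -
  obtain F r where F: "finite F" "F \<subseteq> Lam" "\<forall>\<alpha>\<in>F. r \<alpha> \<in> polyR Lam" "p = (\<Sum>\<alpha>\<in>F. r \<alpha> * Var \<alpha>)"
    using assms(2) unfolding Delta_def by blast
  have "q * p = (\<Sum>\<alpha>\<in>F. (q * r \<alpha>) * Var \<alpha>)"
    unfolding F(4) by (simp add: sum_distrib_left mult.assoc)
  moreover have "\<forall>\<alpha>\<in>F. q * r \<alpha> \<in> polyR Lam" using F(3) assms(1) by (auto intro: polyR_mult)
  ultimately show ?thesis using F by (intro DeltaI[of F Lam "\<lambda>\<alpha>. q * r \<alpha>"])
qed
lemma Delta_sum: "(\<And>i. i \<in> I \<Longrightarrow> f i \<in> Delta Lam) \<Longrightarrow> sum f I \<in> Delta Lam"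
  by (induct I rule: infinite_finite_induct) (simp_all add: Delta_add)
lemma Delta_polyR: "p \<in> Delta Lam \<Longrightarrow> p \<in> polyR Lam"
  unfolding Delta_def by (auto intro!: polyR_sum polyR_mult polyR_Var)

lemma lookup_mult_Var_zero: fixes r :: "('l, 'k::field) mpoly" shows "Poly_Mapping.lookup (r * Var \<alpha>) 0 = 0"
proof -
  have "0 \<notin> Poly_Mapping.keys (r * Var \<alpha>)"
  proof
    assume "0 \<in> Poly_Mapping.keys (r * Var \<alpha>)"
    then obtain a b where ab: "0 = a + b" "b \<in> Poly_Mapping.keys (Var \<alpha> :: ('l, 'k) mpoly)"
      using keys_mult[of r "Var \<alpha>"] by blast
    then have "b = Poly_Mapping.single \<alpha> 1" by (simp add: Var_def)
    then have "Poly_Mapping.lookup (a + b) \<alpha> \<noteq> 0" by (simp add: lookup_add)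
    with ab show False by simp
  qed
  then show ?thesis by (simp add: in_keys_iff)
qed
lemma Delta_lookup_zero: "p \<in> Delta Lam \<Longrightarrow> Poly_Mapping.lookup p 0 = 0"
  unfolding Delta_def by (auto simp: lookup_sum lookup_mult_Var_zero)

lemma sum_monomials: "p = (\<Sum>m\<in>Poly_Mapping.keys p. Poly_Mapping.single m (Poly_Mapping.lookup p m))"
proof (rule poly_mapping_eqI)
  fix k
  show "Poly_Mapping.lookup p k = Poly_Mapping.lookup (\<Sum>m\<in>Poly_Mapping.keys p. Poly_Mapping.single m (Poly_Mapping.lookup p m)) k"
    by (cases "k \<in> Poly_Mapping.keys p") (simp_all add: lookup_sum lookup_single when_def in_keys_iff)
qed

lemma single_in_Delta:
  assumes "Poly_Mapping.keys m \<subseteq> Lam" "m \<noteq> 0"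
  shows "(Poly_Mapping.single m c :: ('l, 'k::field) mpoly) \<in> Delta Lam"
proof -
  obtain \<alpha> where a: "\<alpha> \<in> Poly_Mapping.keys m" using assms(2) by (metis keys_eq_empty ex_in_conv)
  define m' where "m' = m - Poly_Mapping.single \<alpha> 1"
  have m_split: "m' + Poly_Mapping.single \<alpha> 1 = m"
  proof (rule poly_mapping_eqI)
    fix k show "Poly_Mapping.lookup (m' + Poly_Mapping.single \<alpha> 1) k = Poly_Mapping.lookup m k"
      using a by (auto simp: m'_def lookup_add lookup_minus lookup_single when_def in_keys_iff)
  qed
  have keys_m': "Poly_Mapping.keys m' \<subseteq> Poly_Mapping.keys m"
    by (auto simp: m'_def in_keys_iff lookup_minus)
  have "Poly_Mapping.single m c = Poly_Mapping.single m' c * Var \<alpha>"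
    by (simp only: Var_def mult_single m_split mult_1_right)
  moreover have "Poly_Mapping.single m' c \<in> polyR Lam"
    using keys_m' assms(1) by (auto simp: polyR_iff)
  moreover have "\<alpha> \<in> Lam" using a assms(1) by blast
  ultimately show ?thesis using Delta_Var[of \<alpha> Lam "Poly_Mapping.single m' c"] by simp
qed

lemma DeltaI_lookup_zero: assumes "p \<in> polyR Lam" "Poly_Mapping.lookup p 0 = 0" shows "p \<in> Delta Lam"
proof -
  have "(\<Sum>m\<in>Poly_Mapping.keys p. Poly_Mapping.single m (Poly_Mapping.lookup p m)) \<in> Delta Lam"
  proof (rule Delta_sum)
    fix m assume "m \<in> Poly_Mapping.keys p"
    then show "Poly_Mapping.single m (Poly_Mapping.lookup p m) \<in> Delta Lam"
      using assms by (intro single_in_Delta) (auto simp: polyR_iff in_keys_iff)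
  qed
  then show ?thesis using sum_monomials[of p] by simp
qed

lemma Delta_iff: "p \<in> Delta Lam \<longleftrightarrow> p \<in> polyR Lam \<and> Poly_Mapping.lookup p 0 = 0"
  using Delta_polyR Delta_lookup_zero DeltaI_lookup_zero by blast

lemma multS_iff: "p \<in> multS Lam \<longleftrightarrow> p \<in> polyR Lam \<and> Poly_Mapping.lookup p 0 \<noteq> 0"
  unfolding multS_def using Delta_iff by blast

lemma lookup_mult_zero:
  fixes p q :: "('l, 'k::field) mpoly"
  shows "Poly_Mapping.lookup (p * q) 0 = Poly_Mapping.lookup p 0 * Poly_Mapping.lookup q 0"
proof -
  have assms: "p \<in> polyR UNIV" "q \<in> polyR UNIV"
    by (simp_all add: polyR_iff)
  define a where "a = Poly_Mapping.lookup p 0"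
  define b where "b = Poly_Mapping.lookup q 0"
  define d where "d = p - Const a"
  define e where "e = q - Const b"
  have d: "d \<in> Delta UNIV" unfolding d_def a_def
    by (rule DeltaI_lookup_zero) (auto intro: polyR_diff assms polyR_Const simp: lookup_minus lookup_Const)
  have e: "e \<in> Delta UNIV" unfolding e_def b_def
    by (rule DeltaI_lookup_zero) (auto intro: polyR_diff assms polyR_Const simp: lookup_minus lookup_Const)
  have expand: "p * q = Const (a * b) + (Const a * e + Const b * d + d * e)"
    by (simp add: d_def e_def algebra_simps Const_mult)
  have "Const a * e + Const b * d + d * e \<in> Delta UNIV"
    using d e by (intro Delta_add Delta_mult polyR_Const Delta_polyR)
  then have "Poly_Mapping.lookup (Const a * e + Const b * d + d * e) 0 = 0"
    by (rule Delta_lookup_zero)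
  then show ?thesis unfolding expand lookup_add by (simp add: lookup_Const a_def b_def)
qed

lemma multS_mult: "s \<in> multS Lam \<Longrightarrow> t \<in> multS Lam \<Longrightarrow> s * t \<in> multS Lam"
  unfolding multS_iff by (simp add: lookup_mult_zero polyR_mult)
lemma multS_1[simp]: "1 \<in> multS Lam"
  by (simp add: multS_iff)
lemma multS_nonzero: "s \<in> multS Lam \<Longrightarrow> s \<noteq> 0"
  by (auto simp: multS_iff)
lemma multS_polyR: "s \<in> multS Lam \<Longrightarrow> s \<in> polyR Lam"
  by (auto simp: multS_iff)
lemma multS_Const_mult: "c \<noteq> 0 \<Longrightarrow> s \<in> multS Lam \<Longrightarrow> Const c * s \<in> multS Lam"
  by (simp add: multS_iff lookup_Const_mult polyR_mult polyR_Const)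
lemma multS_normalize:
  assumes "t \<in> multS Lam"
  obtains c Fs r where "c \<noteq> 0" "Fs \<subseteq> Lam" "\<forall>\<alpha>\<in>Fs. r \<alpha> \<in> polyR Lam"
    "Const c * t = 1 + (\<Sum>\<alpha>\<in>Fs. r \<alpha> * Var \<alpha>)"
proof -
  define c where "c = inverse (Poly_Mapping.lookup t 0)"
  have c: "c \<noteq> 0" "c * Poly_Mapping.lookup t 0 = 1"
    using assms by (simp_all add: c_def multS_iff)
  have "Const c * t - 1 \<in> Delta Lam"
    using assms c by (intro DeltaI_lookup_zero polyR_diff polyR_mult polyR_Const multS_polyR)
      (auto simp: lookup_minus lookup_Const_mult)
  then obtain Fs r where "Fs \<subseteq> Lam" "\<forall>\<alpha>\<in>Fs. r \<alpha> \<in> polyR Lam"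
    "Const c * t - 1 = (\<Sum>\<alpha>\<in>Fs. r \<alpha> * Var \<alpha>)"
    unfolding Delta_def by blast
  with c(1) show thesis by (intro that) (auto simp: algebra_simps)
qed

lemma lookup_map_mult:
  fixes v :: "'l \<Rightarrow>\<^sub>0 'k::mult_zero"
  shows "Poly_Mapping.lookup (Poly_Mapping.map (\<lambda>a. c * a) v) k = c * Poly_Mapping.lookup v k"
  by (simp add: Poly_Mapping.map.rep_eq when_def)

lemma keys_map_mult:
  fixes v :: "'l \<Rightarrow>\<^sub>0 'k::mult_zero"
  shows "Poly_Mapping.keys (Poly_Mapping.map (\<lambda>a. c * a) v) \<subseteq> Poly_Mapping.keys v"
  by (auto simp: in_keys_iff lookup_map_mult)

lemma Union_eq_constI: "(\<forall>X\<in>M. X = T) \<Longrightarrow> M \<noteq> {} \<Longrightarrow> \<Union>M = T"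
  by blast

locale metabelian_U_algebra =
  fixes scale :: "'k::field \<Rightarrow> 'a::ab_group_add \<Rightarrow> 'a"
    and br :: "'a \<Rightarrow> 'a \<Rightarrow> 'a"
    and Lam :: "'l set"
    and z :: "'l \<Rightarrow> 'a"
    and act :: "('l, 'k) mpoly \<Rightarrow> 'a \<Rightarrow> 'a"
  assumes U_alg: "U_algebra scale br Lam z act"
begin

lemma is_lie_algebra: "lie_algebra scale br" using U_alg by (simp add: U_algebra_def)

sublocale vs: vector_space scale using is_lie_algebra by (simp add: lie_algebra_def)

lemma br_add_left: "br (x + y) w = br x w + br y w" using is_lie_algebra by (simp add: lie_algebra_def)
lemma br_add_right: "br w (x + y) = br w x + br w y" using is_lie_algebra by (simp add: lie_algebra_def)
lemma br_scale_left: "br (scale c x) y = scale c (br x y)" using is_lie_algebra by (simp add: lie_algebra_def)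
lemma br_scale_right: "br x (scale c y) = scale c (br x y)" using is_lie_algebra by (simp add: lie_algebra_def)
lemma br_self: "br x x = 0" using is_lie_algebra by (simp add: lie_algebra_def)
lemma jacobi: "br x (br y w) + br y (br w x) + br w (br x y) = 0" using is_lie_algebra by (simp add: lie_algebra_def)
lemma metabelian_br: "br (br a b) (br c d) = 0" using U_alg by (simp add: U_algebra_def metabelian_def)

lemma br_left_hom: "module_hom scale scale (\<lambda>x. br x y)"
  using is_lie_algebra unfolding lie_algebra_def module_hom_iff_linear linear_iff by simp
lemma br_right_hom: "module_hom scale scale (br x)"
  using is_lie_algebra unfolding lie_algebra_def module_hom_iff_linear linear_iff by simp

lemma br_zero_left[simp]: "br 0 y = 0" using module_hom.zero[OF br_left_hom] .
lemma br_zero_right[simp]: "br y 0 = 0" using module_hom.zero[OF br_right_hom] .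
lemma br_minus_right: "br y (- x) = - br y x" using module_hom.neg[OF br_right_hom] .
lemma br_sum_right: "br u (sum f I) = (\<Sum>i\<in>I. br u (f i))" using module_hom.sum[OF br_right_hom] .

lemma br_antisym: "br x y = - br y x"
proof -
  have "0 = br (x + y) (x + y)" by (simp add: br_self)
  also have "\<dots> = br x x + br y x + (br x y + br y y)" by (simp add: br_add_left br_add_right)
  also have "\<dots> = br x y + br y x" by (simp add: br_self add.commute)
  finally have "br x y + br y x = 0" by simp
  then show ?thesis by (subst eq_neg_iff_add_eq_0)
qed

lemma jacobi_left: "br (br v w) e = br (br v e) w - br (br w e) v"
proof -
  have "br e (br v w) + (br v (br w e) + br w (br e v)) = 0"
    using jacobi[of v w e] by (simp add: add_ac)
  then have jacobi_e: "br e (br v w) = - (br v (br w e) + br w (br e v))"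
    by (subst eq_neg_iff_add_eq_0)
  have "br (br v w) e = - br e (br v w)" "br (br w e) v = - br v (br w e)"
    by (rule br_antisym)+
  moreover have "br (br v e) w = br w (br e v)"
    using br_antisym[of "br v e" w] br_antisym[of v e] br_minus_right by simp
  ultimately show ?thesis unfolding jacobi_e by (simp add: algebra_simps)
qed

abbreviation FitA where "FitA \<equiv> Fit scale br"

lemma Fit_iff: "x \<in> FitA \<longleftrightarrow> (\<forall>J. lie_ideal scale br J \<and> \<Union>{I. nilpotent_ideal scale br I} \<subseteq> J \<longrightarrow> x \<in> J)"
  by (auto simp: Fit_def)

lemma Fit_zero[simp]: "0 \<in> FitA"
  unfolding Fit_iff lie_ideal_def vs.subspace_def by blast
lemma Fit_add: "x \<in> FitA \<Longrightarrow> y \<in> FitA \<Longrightarrow> x + y \<in> FitA"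
  unfolding Fit_iff lie_ideal_def vs.subspace_def by blast
lemma Fit_scale: "x \<in> FitA \<Longrightarrow> scale c x \<in> FitA"
  unfolding Fit_iff lie_ideal_def vs.subspace_def by blast
lemma Fit_br_right: "x \<in> FitA \<Longrightarrow> br a x \<in> FitA"
  unfolding Fit_iff lie_ideal_def vs.subspace_def by blast
lemma Fit_uminus: "x \<in> FitA \<Longrightarrow> - x \<in> FitA"
  using Fit_scale[of x "-1"] by simp
lemma Fit_diff: "x \<in> FitA \<Longrightarrow> y \<in> FitA \<Longrightarrow> x - y \<in> FitA"
  unfolding diff_conv_add_uminus by (intro Fit_add Fit_uminus)
lemma Fit_br_left: "x \<in> FitA \<Longrightarrow> br x a \<in> FitA"
  using Fit_uminus[OF Fit_br_right[of x a]] br_antisym[of x a] by simp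
lemma Fit_sum: "(\<And>i. i \<in> I \<Longrightarrow> f i \<in> FitA) \<Longrightarrow> sum f I \<in> FitA"
  by (induct I rule: infinite_finite_induct) (simp_all add: Fit_add)
lemma nilpotent_ideal_subset_Fit: "nilpotent_ideal scale br I \<Longrightarrow> x \<in> I \<Longrightarrow> x \<in> FitA"
  by (auto simp: Fit_iff)

lemma span_br_abelian:
  assumes "x \<in> vs.span {br a b | a b. True}" "y \<in> vs.span {br a b | a b. True}"
  shows "br x y = 0"
proof -
  have generator: "br x y = 0" if "x \<in> {br a b | a b. True}" for x
    using assms(2)
  proof (induct rule: vs.span_induct_alt)
    case (step d y1 y2)
    then show ?case using that by (auto simp: br_add_right br_scale_right metabelian_br)
  qed simp
  show ?thesis
    using assms(1)
  proof (induct rule: vs.span_induct_alt)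
    case (step c x1 x2)
    then show ?case using generator by (simp add: br_add_left br_scale_left)
  qed simp
qed

lemma abelian_ideal_nilpotent:
  assumes "lie_ideal scale br I" "\<And>x y. x \<in> I \<Longrightarrow> y \<in> I \<Longrightarrow> br x y = 0"
  shows "nilpotent_ideal scale br I"
proof -
  have "0 \<in> I" using assms(1) unfolding lie_ideal_def vs.subspace_def by blast
  then have "{br x y | x y. x \<in> I \<and> y \<in> I} = {0}"
    using assms(2) by force
  then have "lcs scale br I (Suc 0) = {0}" by simp
  with assms(1) show ?thesis unfolding nilpotent_ideal_def by blast
qed

lemma br_in_Fit: "br a b \<in> FitA"
proof (rule nilpotent_ideal_subset_Fit)
  let ?I = "vs.span {br a b | a b. True}"
  have "lie_ideal scale br ?I"
    unfolding lie_ideal_def by (auto intro!: vs.span_base)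
  then show "nilpotent_ideal scale br ?I"
    using span_br_abelian by (rule abelian_ideal_nilpotent)
  show "br a b \<in> ?I" by (auto intro!: vs.span_base)
qed

lemma is_R_action: "R_action scale br Lam z act" using U_alg by (simp add: U_algebra_def)

lemma act_Fit: "p \<in> polyR Lam \<Longrightarrow> b \<in> FitA \<Longrightarrow> act p b \<in> FitA"
  using is_R_action by (simp add: R_action_def)
lemma act_add_right: "p \<in> polyR Lam \<Longrightarrow> b \<in> FitA \<Longrightarrow> b' \<in> FitA \<Longrightarrow> act p (b + b') = act p b + act p b'"
  using is_R_action by (simp add: R_action_def)
lemma act_add_left: "p \<in> polyR Lam \<Longrightarrow> q \<in> polyR Lam \<Longrightarrow> b \<in> FitA \<Longrightarrow> act (p + q) b = act p b + act q b"
  using is_R_action by (simp add: R_action_def)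
lemma act_mult: "p \<in> polyR Lam \<Longrightarrow> q \<in> polyR Lam \<Longrightarrow> b \<in> FitA \<Longrightarrow> act (p * q) b = act p (act q b)"
  using is_R_action by (simp add: R_action_def)
lemma act_Const: "b \<in> FitA \<Longrightarrow> act (Const c) b = scale c b"
  using is_R_action by (simp add: R_action_def)
lemma act_Var: "\<alpha> \<in> Lam \<Longrightarrow> b \<in> FitA \<Longrightarrow> act (Var \<alpha>) b = br b (z \<alpha>)"
  using is_R_action by (simp add: R_action_def)
lemma torsion_free: "p \<in> polyR Lam \<Longrightarrow> b \<in> FitA \<Longrightarrow> p \<noteq> 0 \<Longrightarrow> act p b = 0 \<Longrightarrow> b = 0"
  using U_alg by (simp add: U_algebra_def)
lemma Fit_abelian: "b \<in> FitA \<Longrightarrow> b' \<in> FitA \<Longrightarrow> br b b' = 0"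
  using U_alg by (simp add: U_algebra_def)
lemma is_fit_basis: "fit_basis scale br Lam z" using U_alg by (simp add: U_algebra_def)

lemma act_zero_right[simp]: "p \<in> polyR Lam \<Longrightarrow> act p 0 = 0"
  using act_add_right[of p 0 0] by simp
lemma act_1[simp]: "b \<in> FitA \<Longrightarrow> act 1 b = b"
  using act_Const[of b 1] by simp
lemma act_0[simp]: "b \<in> FitA \<Longrightarrow> act 0 b = 0"
  using act_Const[of b 0] by simp
lemma act_minus_right: "p \<in> polyR Lam \<Longrightarrow> b \<in> FitA \<Longrightarrow> act p (- b) = - act p b"
  using act_add_right[of p b "- b"] Fit_uminus[of b] by (simp add: eq_neg_iff_add_eq_0 add.commute)
lemma act_diff_right: "p \<in> polyR Lam \<Longrightarrow> b \<in> FitA \<Longrightarrow> b' \<in> FitA \<Longrightarrow> act p (b - b') = act p b - act p b'"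
proof -
  assume a: "p \<in> polyR Lam" "b \<in> FitA" "b' \<in> FitA"
  have "act p (b + - b') = act p b + act p (- b')" using a by (intro act_add_right Fit_uminus)
  then show ?thesis using a by (simp add: act_minus_right)
qed
lemma act_minus_left: "p \<in> polyR Lam \<Longrightarrow> b \<in> FitA \<Longrightarrow> act (- p) b = - act p b"
  using act_add_left[of p "- p" b] polyR_uminus[of p Lam] by (simp add: eq_neg_iff_add_eq_0 add.commute)
lemma act_comm: "p \<in> polyR Lam \<Longrightarrow> q \<in> polyR Lam \<Longrightarrow> b \<in> FitA \<Longrightarrow> act p (act q b) = act q (act p b)"
  using act_mult[of p q b] act_mult[of q p b] by (simp add: mult.commute)
lemma act_scale_right: "p \<in> polyR Lam \<Longrightarrow> b \<in> FitA \<Longrightarrow> act p (scale c b) = scale c (act p b)"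
  using act_comm[of p "Const c" b] polyR_Const[of c Lam] act_Const[of b c] act_Const[of "act p b" c] act_Fit[of p b]
  by simp
lemma act_sum_left: "(\<And>i. i \<in> I \<Longrightarrow> f i \<in> polyR Lam) \<Longrightarrow> b \<in> FitA \<Longrightarrow> act (sum f I) b = (\<Sum>i\<in>I. act (f i) b)"
proof (induct I rule: infinite_finite_induct)
  case (insert x F)
  then show ?case by (simp add: act_add_left polyR_sum)
qed simp_all
lemma act_sum_right: "p \<in> polyR Lam \<Longrightarrow> (\<And>i. i \<in> I \<Longrightarrow> f i \<in> FitA) \<Longrightarrow> act p (sum f I) = (\<Sum>i\<in>I. act p (f i))"
proof (induct I rule: infinite_finite_induct)
  case (insert x F)
  then show ?case by (simp add: act_add_right Fit_sum)
qed simp_all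
lemma act_cancel: "s \<in> multS Lam \<Longrightarrow> b \<in> FitA \<Longrightarrow> b' \<in> FitA \<Longrightarrow> act s b = act s b' \<Longrightarrow> b = b'"
  using torsion_free[of s "b - b'"] act_diff_right[of s b b'] multS_polyR[of s Lam] multS_nonzero[of s Lam] Fit_diff[of b b']
  by simp

abbreviation fr where "fr \<equiv> frac scale br Lam act"

text \<open>Since Fit(A) is torsion-free, equality of fractions is plain cross-multiplication.\<close>

lemma mem_frac_iff:
  assumes "u \<in> FitA" "s \<in> polyR Lam"
  shows "(a, b) \<in> fr u s \<longleftrightarrow> a \<in> FitA \<and> b \<in> multS Lam \<and> act b u = act s a"
proof
  assume "(a, b) \<in> fr u s"
  then obtain t where t: "a \<in> FitA" "b \<in> multS Lam" "t \<in> multS Lam" "act t (act b u - act s a) = 0"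
    unfolding frac_def by blast
  have "act b u - act s a \<in> FitA" using t assms by (intro Fit_diff act_Fit) (auto intro: multS_polyR)
  then have "act b u - act s a = 0"
    using torsion_free[OF multS_polyR[OF t(3)] _ multS_nonzero[OF t(3)] t(4)] by simp
  then show "a \<in> FitA \<and> b \<in> multS Lam \<and> act b u = act s a" using t by simp
next
  assume "a \<in> FitA \<and> b \<in> multS Lam \<and> act b u = act s a"
  then show "(a, b) \<in> fr u s" unfolding frac_def
    by (auto intro!: bexI[of _ 1])
qed

lemma frac_self: "u \<in> FitA \<Longrightarrow> s \<in> multS Lam \<Longrightarrow> (u, s) \<in> fr u s"
  by (simp add: mem_frac_iff multS_polyR act_comm)

lemma cross_mult_trans:
  assumes "u \<in> FitA" "u' \<in> FitA" "a \<in> FitA" "s \<in> multS Lam" "s' \<in> polyR Lam" "b \<in> polyR Lam"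
    and "act s' u = act s u'" "act b u = act s a"
  shows "act b u' = act s' a"
proof -
  have s: "s \<in> polyR Lam" using assms(4) by (rule multS_polyR)
  have "act s (act b u') = act b (act s u')" by (rule act_comm[OF s assms(6,2)])
  also have "\<dots> = act b (act s' u)" using assms(7) by simp
  also have "\<dots> = act s' (act b u)" by (rule act_comm[OF assms(6,5,1)])
  also have "\<dots> = act s' (act s a)" using assms(8) by simp
  also have "\<dots> = act s (act s' a)" by (rule act_comm[OF assms(5) s assms(3)])
  finally show ?thesis
    using act_cancel[OF assms(4)] act_Fit assms by simp
qed

lemma frac_eq:
  assumes "u \<in> FitA" "u' \<in> FitA" "s \<in> multS Lam" "s' \<in> multS Lam" "act s' u = act s u'"
  shows "fr u s = fr u' s'"
proof (rule set_eqI)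
  fix x :: "'a \<times> ('l, 'k) mpoly"
  obtain a b where x: "x = (a, b)" by (cases x)
  have "act b u = act s a \<longleftrightarrow> act b u' = act s' a" if "a \<in> FitA" "b \<in> multS Lam"
  proof -
    have b: "b \<in> polyR Lam" using that(2) by (rule multS_polyR)
    have s: "s \<in> polyR Lam" "s' \<in> polyR Lam" using assms(3,4) multS_polyR by auto
    show ?thesis
      using cross_mult_trans[OF assms(1,2) that(1) assms(3) s(2) b assms(5)]
        cross_mult_trans[OF assms(2,1) that(1) assms(4) s(1) b assms(5)[symmetric]]
      by blast
  qed
  then show "x \<in> fr u s \<longleftrightarrow> x \<in> fr u' s'"
    unfolding x using assms by (auto simp: mem_frac_iff multS_polyR)
qed

lemma frac_inj: "u \<in> FitA \<Longrightarrow> u' \<in> FitA \<Longrightarrow> s \<in> multS Lam \<Longrightarrow> fr u s = fr u' s \<Longrightarrow> u = u'"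
  using frac_self[of u s] act_cancel[of s u u'] by (simp add: mem_frac_iff multS_polyR)

lemma fadd_frac:
  assumes "u \<in> FitA" "u' \<in> FitA" "s \<in> multS Lam"
  shows "fadd scale br Lam act (fr u s) (fr u' s) = fr (u + u') s"
  unfolding fadd_def
proof (rule Union_eq_constI)
  show "{fr (act s' u1 + act s1 u1') (s1 * s') | u1 s1 u1' s'. (u1, s1) \<in> fr u s \<and> (u1', s') \<in> fr u' s} \<noteq> {}"
    using frac_self[OF assms(1,3)] frac_self[OF assms(2,3)] by blast
  show "\<forall>X\<in>{fr (act s' u1 + act s1 u1') (s1 * s') | u1 s1 u1' s'. (u1, s1) \<in> fr u s \<and> (u1', s') \<in> fr u' s}. X = fr (u + u') s"
  proof (clarify)
    fix u1 s1 u1' s'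
    assume mem1: "(u1, s1) \<in> fr u s" and mem2: "(u1', s') \<in> fr u' s"
    have s_polyR: "s \<in> polyR Lam" using assms multS_polyR by auto
    from mem1 have cross1: "u1 \<in> FitA" "s1 \<in> multS Lam" "act s1 u = act s u1" using mem_frac_iff assms s_polyR by auto
    from mem2 have cross2: "u1' \<in> FitA" "s' \<in> multS Lam" "act s' u' = act s u1'" using mem_frac_iff assms s_polyR by auto
    have denoms: "s1 \<in> polyR Lam" "s' \<in> polyR Lam" using cross1 cross2 multS_polyR by auto
    show "fr (act s' u1 + act s1 u1') (s1 * s') = fr (u + u') s"
    proof (rule frac_eq)
      show "act s' u1 + act s1 u1' \<in> FitA" using cross1 cross2 denoms by (intro Fit_add act_Fit)
      show "s1 * s' \<in> multS Lam" by (rule multS_mult[OF cross1(2) cross2(2)])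
      have "act s (act s' u1 + act s1 u1') = act s' (act s u1) + act s1 (act s u1')"
        using act_add_right act_Fit act_comm cross1 cross2 denoms s_polyR by simp
      also have "\<dots> = act s' (act s1 u) + act s1 (act s' u')" using cross1 cross2 by simp
      also have "\<dots> = act s1 (act s' u) + act s1 (act s' u')"
        using act_comm cross1 cross2 denoms assms by simp
      also have "\<dots> = act s1 (act s' u + act s' u')"
        by (rule act_add_right[symmetric]) (use denoms act_Fit assms in auto)
      also have "\<dots> = act s1 (act s' (u + u'))"
        using act_add_right[of s' u u'] denoms assms by simp
      also have "\<dots> = act (s1 * s') (u + u')"
        by (rule act_mult[symmetric]) (use denoms assms in \<open>auto intro: Fit_add\<close>)
      finally show "act s (act s' u1 + act s1 u1') = act (s1 * s') (u + u')" .
    qed (use assms cross1 cross2 in \<open>auto intro: Fit_add\<close>)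
  qed
qed

lemma fmul_frac:
  assumes "u \<in> FitA" "s \<in> multS Lam" "p \<in> polyR Lam"
  shows "fmul scale br Lam act p (fr u s) = fr (act p u) s"
  unfolding fmul_def
proof (rule Union_eq_constI)
  show "{fr (act p u1) s1 | u1 s1. (u1, s1) \<in> fr u s} \<noteq> {}"
    using frac_self[OF assms(1,2)] by blast
  show "\<forall>X\<in>{fr (act p u1) s1 | u1 s1. (u1, s1) \<in> fr u s}. X = fr (act p u) s"
  proof (clarify)
    fix u1 s1 assume mem1: "(u1, s1) \<in> fr u s"
    have s_polyR: "s \<in> polyR Lam" using assms multS_polyR by auto
    from mem1 have cross1: "u1 \<in> FitA" "s1 \<in> multS Lam" "act s1 u = act s u1" using mem_frac_iff assms s_polyR by auto
    have denoms: "s1 \<in> polyR Lam" using cross1 multS_polyR by auto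
    show "fr (act p u1) s1 = fr (act p u) s"
    proof (rule frac_eq)
      have "act s (act p u1) = act p (act s u1)" using act_comm assms s_polyR cross1 by simp
      also have "\<dots> = act p (act s1 u)" using cross1 by simp
      also have "\<dots> = act s1 (act p u)" using act_comm assms denoms by simp
      finally show "act s (act p u1) = act s1 (act p u)" .
    qed (use assms cross1 in \<open>auto intro: act_Fit\<close>)
  qed
qed

lemma fscale_frac:
  assumes "u \<in> FitA" "s \<in> multS Lam"
  shows "fscale scale br Lam act c (fr u s) = fr (scale c u) s"
  unfolding fscale_def
proof (rule Union_eq_constI)
  show "{fr (scale c u1) s1 | u1 s1. (u1, s1) \<in> fr u s} \<noteq> {}"
    using frac_self[OF assms(1,2)] by blast
  show "\<forall>X\<in>{fr (scale c u1) s1 | u1 s1. (u1, s1) \<in> fr u s}. X = fr (scale c u) s"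
  proof (clarify)
    fix u1 s1 assume mem1: "(u1, s1) \<in> fr u s"
    have s_polyR: "s \<in> polyR Lam" using assms multS_polyR by auto
    from mem1 have cross1: "u1 \<in> FitA" "s1 \<in> multS Lam" "act s1 u = act s u1" using mem_frac_iff assms s_polyR by auto
    have denoms: "s1 \<in> polyR Lam" using cross1 multS_polyR by auto
    show "fr (scale c u1) s1 = fr (scale c u) s"
    proof (rule frac_eq)
      show "act s (scale c u1) = act s1 (scale c u)"
        using act_scale_right cross1 denoms s_polyR assms by simp
    qed (use assms cross1 in \<open>auto intro: Fit_scale\<close>)
  qed
qed

lemma frac_rescale:
  assumes "u \<in> FitA" "s \<in> multS Lam" "t \<in> multS Lam"
  shows "fr u s = fr (act t u) (t * s)"
proof (rule frac_eq)
  have R: "s \<in> polyR Lam" "t \<in> polyR Lam" using assms multS_polyR by auto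
  show "act (t * s) u = act s (act t u)" using act_mult act_comm R assms by simp
qed (use assms in \<open>auto intro: act_Fit multS_polyR multS_mult\<close>)

abbreviation zs where "zs \<equiv> zsum scale z"

lemma zsum_superset:
  assumes "finite K" "Poly_Mapping.keys c \<subseteq> K"
  shows "zs c = (\<Sum>\<alpha>\<in>K. scale (Poly_Mapping.lookup c \<alpha>) (z \<alpha>))"
  unfolding zsum_def
  by (rule sum.mono_neutral_left) (use assms in \<open>auto simp: in_keys_iff\<close>)

lemma zsum_0[simp]: "zs 0 = 0" by (simp add: zsum_def)

lemma zsum_add: "zs (c + c') = zs c + zs c'"
proof -
  define K where "K = Poly_Mapping.keys c \<union> Poly_Mapping.keys c'"
  have K: "finite K" "Poly_Mapping.keys c \<subseteq> K" "Poly_Mapping.keys c' \<subseteq> K" "Poly_Mapping.keys (c + c') \<subseteq> K"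
    using keys_add[of c c'] by (auto simp: K_def)
  show ?thesis
    unfolding zsum_superset[OF K(1) K(2)] zsum_superset[OF K(1) K(3)] zsum_superset[OF K(1) K(4)]
    by (simp add: lookup_add vs.scale_left_distrib sum.distrib)
qed

lemma zsum_diff: "zs (c - c') = zs c - zs c'"
  using zsum_add[of "c - c'" c'] by (simp add: eq_diff_eq)

lemma zsum_map_mult: "zs (Poly_Mapping.map (\<lambda>a. c * a) v) = scale c (zs v)"
proof -
  have "zs (Poly_Mapping.map (\<lambda>a. c * a) v) = (\<Sum>\<alpha>\<in>Poly_Mapping.keys v. scale (Poly_Mapping.lookup (Poly_Mapping.map (\<lambda>a. c * a) v) \<alpha>) (z \<alpha>))"
    by (rule zsum_superset) (simp_all add: keys_map_mult)
  then show ?thesis by (simp add: lookup_map_mult zsum_def vs.scale_sum_right)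
qed

lemma coordV_Fit: assumes "e \<in> FitA" shows "coordV scale br Lam z e = 0"
  unfolding coordV_def
proof (rule the_equality)
  show "Poly_Mapping.keys 0 \<subseteq> Lam \<and> e - zs 0 \<in> FitA" using assms by simp
  fix c assume c: "Poly_Mapping.keys c \<subseteq> Lam \<and> e - zs c \<in> FitA"
  then have "zs c \<in> FitA" using Fit_diff[OF assms, of "e - zs c"] by simp
  then show "c = 0" using is_fit_basis c unfolding fit_basis_def by blast
qed

lemma inclA_Fit: "e \<in> FitA \<Longrightarrow> inclA scale br Lam z act e = (0, fr e 1)"
  by (simp add: inclA_def coordV_Fit)

lemma lin_polyR: "Poly_Mapping.keys w \<subseteq> Lam \<Longrightarrow> lin w \<in> polyR Lam"
  unfolding lin_def by (auto intro!: polyR_sum polyR_mult polyR_Const polyR_Var)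

lemma act_lin:
  assumes "Poly_Mapping.keys w \<subseteq> Lam" "u \<in> FitA"
  shows "act (lin w) u = br u (zs w)"
proof -
  have "act (lin w) u = (\<Sum>\<alpha>\<in>Poly_Mapping.keys w. act (Const (Poly_Mapping.lookup w \<alpha>) * Var \<alpha>) u)"
    unfolding lin_def using assms by (intro act_sum_left) (auto intro!: polyR_mult polyR_Const polyR_Var)
  also have "\<dots> = (\<Sum>\<alpha>\<in>Poly_Mapping.keys w. scale (Poly_Mapping.lookup w \<alpha>) (br u (z \<alpha>)))"
  proof (rule sum.cong)
    fix \<alpha> assume a: "\<alpha> \<in> Poly_Mapping.keys w"
    then have aL: "\<alpha> \<in> Lam" using assms by auto
    have "act (Const (Poly_Mapping.lookup w \<alpha>) * Var \<alpha>) u = act (Const (Poly_Mapping.lookup w \<alpha>)) (act (Var \<alpha>) u)"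
      using aL assms by (intro act_mult polyR_Const polyR_Var)
    also have "\<dots> = scale (Poly_Mapping.lookup w \<alpha>) (br u (z \<alpha>))"
      using aL assms by (simp add: act_Var act_Const Fit_br_left)
    finally show "act (Const (Poly_Mapping.lookup w \<alpha>) * Var \<alpha>) u = scale (Poly_Mapping.lookup w \<alpha>) (br u (z \<alpha>))" .
  qed simp
  also have "\<dots> = br u (zs w)"
    by (simp add: zsum_def br_sum_right br_scale_right)
  finally show ?thesis .
qed

lemma frac_rescale_Const:
  assumes "u \<in> FitA" "t \<in> multS Lam" "c \<noteq> 0"
  shows "fr u t = fr (scale c u) (Const c * t)"
proof (rule frac_eq)
  have tR: "t \<in> polyR Lam" using assms multS_polyR by auto
  show "act (Const c * t) u = act t (scale c u)"
    using act_mult[OF polyR_Const tR assms(1)] act_Const act_scale_right act_Fit tR assms by simp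
qed (use assms in \<open>auto intro: Fit_scale multS_Const_mult\<close>)

lemma common_denominator:
  assumes "finite G" "\<forall>g\<in>G. \<exists>u s. u \<in> FitA \<and> s \<in> multS Lam \<and> snd g = fr u s"
  shows "\<exists>t\<in>multS Lam. \<forall>g\<in>G. \<exists>u\<in>FitA. snd g = fr u t"
  using assms
proof (induct G rule: finite_induct)
  case empty then show ?case by (auto intro: multS_1)
next
  case (insert g G)
  then obtain t where t: "t \<in> multS Lam" "\<forall>g\<in>G. \<exists>u\<in>FitA. snd g = fr u t" by auto
  obtain u1 s1 where g: "u1 \<in> FitA" "s1 \<in> multS Lam" "snd g = fr u1 s1" using insert by auto
  have "\<forall>x\<in>insert g G. \<exists>u\<in>FitA. snd x = fr u (s1 * t)"
  proof
    fix x assume "x \<in> insert g G"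
    then show "\<exists>u\<in>FitA. snd x = fr u (s1 * t)"
    proof
      assume "x = g"
      then have "snd x = fr (act t u1) (t * s1)" using frac_rescale[OF g(1,2) t(1)] g by simp
      moreover have "act t u1 \<in> FitA" using t g by (intro act_Fit multS_polyR)
      ultimately show ?thesis by (auto simp: mult.commute)
    next
      assume "x \<in> G"
      then obtain u where u: "u \<in> FitA" "snd x = fr u t" using t by auto
      then have "snd x = fr (act s1 u) (s1 * t)" using frac_rescale[OF u(1) t(1) g(2)] by simp
      moreover have "act s1 u \<in> FitA" using u g by (intro act_Fit multS_polyR)
      ultimately show ?thesis by auto
    qed
  qed
  moreover have "s1 * t \<in> multS Lam" using g t by (intro multS_mult)
  ultimately show ?case by blast
qed

end

locale unit_denominator = metabelian_U_algebra scale br Lam z act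
  for scale :: "'k::field \<Rightarrow> 'a::ab_group_add \<Rightarrow> 'a"
    and br :: "'a \<Rightarrow> 'a \<Rightarrow> 'a"
    and Lam :: "'l set"
    and z :: "'l \<Rightarrow> 'a"
    and act :: "('l, 'k) mpoly \<Rightarrow> 'a \<Rightarrow> 'a" +
  fixes s :: "('l, 'k) mpoly" and Fs :: "'l set" and r :: "'l \<Rightarrow> ('l, 'k) mpoly"
  assumes s_multS: "s \<in> multS Lam" and Fs_subset: "Fs \<subseteq> Lam"
    and r_polyR: "\<And>\<alpha>. \<alpha> \<in> Fs \<Longrightarrow> r \<alpha> \<in> polyR Lam"
    and s_expansion: "s = 1 + (\<Sum>\<alpha>\<in>Fs. r \<alpha> * Var \<alpha>)"
begin

text \<open>shift extends the action of s - 1 from Fit(A) to all of A, with x_\<alpha> acting as bracketing with z_\<alpha>.\<close>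

definition shift where "shift V = (\<Sum>\<alpha>\<in>Fs. act (r \<alpha>) (br V (z \<alpha>)))"

lemma s_polyR: "s \<in> polyR Lam" using s_multS multS_polyR by auto

lemma shift_Fit: "shift V \<in> FitA"
  unfolding shift_def by (intro Fit_sum act_Fit r_polyR br_in_Fit)

lemma shift_add: "shift (V + W) = shift V + shift W"
  unfolding shift_def by (simp add: br_add_left act_add_right r_polyR br_in_Fit sum.distrib)

lemma shift_scale: "shift (scale c V) = scale c (shift V)"
  unfolding shift_def by (simp add: br_scale_left act_scale_right r_polyR br_in_Fit vs.scale_sum_right)


lemma shift_zero[simp]: "shift 0 = 0"
  unfolding shift_def by (simp add: r_polyR)

lemma act_s_expansion:
  assumes "e \<in> FitA"
  shows "act s e = e + shift e"
proof -
  have "(\<Sum>\<alpha>\<in>Fs. r \<alpha> * Var \<alpha>) \<in> polyR Lam"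
    using Fs_subset by (intro polyR_sum polyR_mult r_polyR polyR_Var) auto
  then have "act s e = act 1 e + act (\<Sum>\<alpha>\<in>Fs. r \<alpha> * Var \<alpha>) e"
    unfolding s_expansion using assms by (intro act_add_left) auto
  also have "act (\<Sum>\<alpha>\<in>Fs. r \<alpha> * Var \<alpha>) e = (\<Sum>\<alpha>\<in>Fs. act (r \<alpha> * Var \<alpha>) e)"
    using Fs_subset assms by (intro act_sum_left polyR_mult r_polyR polyR_Var) auto
  also have "\<dots> = shift e"
    unfolding shift_def
  proof (rule sum.cong)
    fix \<alpha> assume "\<alpha> \<in> Fs"
    moreover from this have "\<alpha> \<in> Lam" using Fs_subset by auto
    ultimately show "act (r \<alpha> * Var \<alpha>) e = act (r \<alpha>) (br e (z \<alpha>))"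
      using act_mult[OF r_polyR polyR_Var assms] act_Var[OF _ assms] by simp
  qed simp
  finally show ?thesis using assms by simp
qed

lemma br_shift_zsum:
  assumes "Poly_Mapping.keys w \<subseteq> Lam"
  shows "br (shift V) (zs w) = (\<Sum>\<alpha>\<in>Fs. act (r \<alpha>) (br (br V (z \<alpha>)) (zs w)))"
proof -
  have "br (shift V) (zs w) = act (lin w) (shift V)"
    by (rule act_lin[OF assms shift_Fit, symmetric])
  also have "\<dots> = (\<Sum>\<alpha>\<in>Fs. act (lin w) (act (r \<alpha>) (br V (z \<alpha>))))"
    unfolding shift_def by (rule act_sum_right) (auto intro: lin_polyR[OF assms] act_Fit r_polyR br_in_Fit)
  also have "\<dots> = (\<Sum>\<alpha>\<in>Fs. act (r \<alpha>) (br (br V (z \<alpha>)) (zs w)))"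
    using act_comm[OF lin_polyR[OF assms] r_polyR br_in_Fit] by (simp add: act_lin[OF assms br_in_Fit])
  finally show ?thesis .
qed

lemma shift_br:
  assumes "Poly_Mapping.keys v \<subseteq> Lam" "Poly_Mapping.keys w \<subseteq> Lam"
  shows "shift (br (zs v) (zs w)) = br (shift (zs v)) (zs w) + br (zs v) (shift (zs w))"
proof -
  have "shift (br (zs v) (zs w))
      = (\<Sum>\<alpha>\<in>Fs. act (r \<alpha>) (br (br (zs v) (z \<alpha>)) (zs w))
                    - act (r \<alpha>) (br (br (zs w) (z \<alpha>)) (zs v)))"
    unfolding shift_def
    by (rule sum.cong) (simp_all add: jacobi_left[of "zs v" "zs w"] act_diff_right r_polyR br_in_Fit)
  also have "\<dots> = (\<Sum>\<alpha>\<in>Fs. act (r \<alpha>) (br (br (zs v) (z \<alpha>)) (zs w)))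
      - (\<Sum>\<alpha>\<in>Fs. act (r \<alpha>) (br (br (zs w) (z \<alpha>)) (zs v)))"
    by (rule sum_subtractf)
  also have "\<dots> = br (shift (zs v)) (zs w) - br (shift (zs w)) (zs v)"
    using assms by (simp add: br_shift_zsum)
  finally show ?thesis using br_antisym[of "shift (zs w)" "zs v"] by simp
qed

lemma embed_br_identity:
  assumes v: "Poly_Mapping.keys v \<subseteq> Lam" and w: "Poly_Mapping.keys w \<subseteq> Lam"
    and u: "u \<in> FitA" and u': "u' \<in> FitA"
  shows "act s (br (zs v) (zs w)) + (act (lin w) u + act (- lin v) u')
       = br (zs v + shift (zs v) + u) (zs w + shift (zs w) + u')"
proof -
  have "br (zs v + shift (zs v) + u) (zs w + shift (zs w) + u')
      = br (zs v) (zs w) + br (zs v) (shift (zs w)) + br (zs v) u'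
        + (br (shift (zs v)) (zs w) + br (shift (zs v)) (shift (zs w)) + br (shift (zs v)) u')
        + (br u (zs w) + br u (shift (zs w)) + br u u')"
    by (simp add: br_add_left br_add_right)
  also have "\<dots> = br (zs v) (zs w) + (br (shift (zs v)) (zs w) + br (zs v) (shift (zs w)))
        + (br u (zs w) + br (zs v) u')"
    using Fit_abelian[OF shift_Fit shift_Fit] Fit_abelian[OF shift_Fit u'] Fit_abelian[OF u shift_Fit]
      Fit_abelian[OF u u']
    by (simp add: add_ac)
  also have "\<dots> = act s (br (zs v) (zs w)) + (act (lin w) u + act (- lin v) u')"
    using act_s_expansion[OF br_in_Fit] shift_br[OF v w] act_lin[OF w u] act_lin[OF v u']
      act_minus_left[OF lin_polyR[OF v] u'] br_antisym[of "zs v" u']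
    by simp
  finally show ?thesis ..
qed

definition over_s where
  "over_s x \<longleftrightarrow> Poly_Mapping.keys (fst x) \<subseteq> Lam \<and> (\<exists>u\<in>FitA. snd x = fr u s)"

text \<open>Multiplication by s; well defined on the elements with denominator s.\<close>

definition embed where
  "embed x = zs (fst x) + shift (zs (fst x)) + (THE u. u \<in> FitA \<and> snd x = fr u s)"

lemma embed_frac: assumes "u \<in> FitA" shows "embed (v, fr u s) = zs v + shift (zs v) + u"
proof -
  have "(THE u'. u' \<in> FitA \<and> fr u s = fr u' s) = u"
  proof (rule the_equality)
    show "u \<in> FitA \<and> fr u s = fr u s" using assms by simp
    fix u' assume "u' \<in> FitA \<and> fr u s = fr u' s"
    then show "u' = u" using frac_inj[OF _ assms s_multS, of u'] by auto
  qed
  then show ?thesis by (simp add: embed_def)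
qed

lemma over_sE: assumes "over_s x"
  obtains v u where "x = (v, fr u s)" "Poly_Mapping.keys v \<subseteq> Lam" "u \<in> FitA"
  using assms unfolding over_s_def by (cases x) auto

lemma over_sI: "Poly_Mapping.keys v \<subseteq> Lam \<Longrightarrow> u \<in> FitA \<Longrightarrow> over_s (v, fr u s)"
  unfolding over_s_def by auto

lemma AD_add_over_s: "u \<in> FitA \<Longrightarrow> u' \<in> FitA \<Longrightarrow>
    AD_add scale br Lam act (v, fr u s) (w, fr u' s) = (v + w, fr (u + u') s)"
  by (simp add: AD_add_def fadd_frac s_multS)

lemma AD_scale_over_s: "u \<in> FitA \<Longrightarrow>
    AD_scale scale br Lam act c (v, fr u s) = (Poly_Mapping.map (\<lambda>a. c * a) v, fr (scale c u) s)"
  by (simp add: AD_scale_def fscale_frac s_multS)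

lemma frac_one_over_s: "e \<in> FitA \<Longrightarrow> fr e 1 = fr (act s e) s"
  using frac_rescale[OF _ multS_1 s_multS, of e] by simp

lemma AD_zero_over_s: "AD_zero scale br Lam act = (0, fr 0 s)"
  using frac_one_over_s[of 0] s_polyR by (simp add: AD_zero_def)

lemma AD_br_over_s:
  assumes v: "Poly_Mapping.keys v \<subseteq> Lam" and w: "Poly_Mapping.keys w \<subseteq> Lam"
    and u: "u \<in> FitA" and u': "u' \<in> FitA"
  shows "AD_br scale br Lam z act (v, fr u s) (w, fr u' s)
    = (0, fr (act s (br (zs v) (zs w)) + (act (lin w) u + act (- lin v) u')) s)"
proof -
  have e: "br (zs v) (zs w) \<in> FitA" by (rule br_in_Fit)
  have lw: "lin w \<in> polyR Lam" and lv: "- lin v \<in> polyR Lam"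
    using lin_polyR[OF w] lin_polyR[OF v] polyR_uminus by auto
  have fmul_w: "fmul scale br Lam act (lin w) (fr u s) = fr (act (lin w) u) s"
    by (rule fmul_frac[OF u s_multS lw])
  have fmul_v: "fmul scale br Lam act (- lin v) (fr u' s) = fr (act (- lin v) u') s"
    by (rule fmul_frac[OF u' s_multS lv])
  have fadd_inner: "fadd scale br Lam act (fr (act (lin w) u) s) (fr (act (- lin v) u') s)
      = fr (act (lin w) u + act (- lin v) u') s"
    by (rule fadd_frac) (use u u' lw lv act_Fit s_multS in auto)
  have fadd_outer: "fadd scale br Lam act (fr (act s (br (zs v) (zs w))) s) (fr (act (lin w) u + act (- lin v) u') s)
      = fr (act s (br (zs v) (zs w)) + (act (lin w) u + act (- lin v) u')) s"
    by (rule fadd_frac) (use u u' lw lv act_Fit s_multS s_polyR e in \<open>auto intro: Fit_add\<close>)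
  show ?thesis
    unfolding AD_br_def fst_conv inclA_Fit[OF e] frac_one_over_s[OF e] fmul_w fmul_v fadd_inner
      AD_add_def snd_conv fadd_outer
    by simp
qed

lemma AD_gen_over_s:
  assumes "\<forall>g\<in>G. over_s g" "x \<in> AD_gen scale br Lam z act G"
  shows "over_s x"
  using assms(2)
proof (induct rule: AD_gen.induct)
  case (gen x) then show ?case using assms(1) by auto
next
  case zero then show ?case by (simp add: AD_zero_over_s over_sI)
next
  case (add x y)
  from add(2) obtain v u where x: "x = (v, fr u s)" "Poly_Mapping.keys v \<subseteq> Lam" "u \<in> FitA" by (rule over_sE)
  from add(4) obtain w u' where y: "y = (w, fr u' s)" "Poly_Mapping.keys w \<subseteq> Lam" "u' \<in> FitA" by (rule over_sE)
  show ?case unfolding x(1) y(1) AD_add_over_s[OF x(3) y(3)]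
    using keys_add[of v w] x y by (intro over_sI Fit_add) auto
next
  case (smult x c)
  from smult(2) obtain v u where x: "x = (v, fr u s)" "Poly_Mapping.keys v \<subseteq> Lam" "u \<in> FitA" by (rule over_sE)
  show ?case unfolding x(1) AD_scale_over_s[OF x(3)]
    using keys_map_mult[of c v] x by (intro over_sI Fit_scale) auto
next
  case (bracket x y)
  from bracket(2) obtain v u where x: "x = (v, fr u s)" "Poly_Mapping.keys v \<subseteq> Lam" "u \<in> FitA" by (rule over_sE)
  from bracket(4) obtain w u' where y: "y = (w, fr u' s)" "Poly_Mapping.keys w \<subseteq> Lam" "u' \<in> FitA" by (rule over_sE)
  have lw: "lin w \<in> polyR Lam" and lv: "- lin v \<in> polyR Lam"
    using lin_polyR[OF y(2)] lin_polyR[OF x(2)] polyR_uminus by auto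
  show ?case unfolding x(1) y(1) AD_br_over_s[OF x(2) y(2) x(3) y(3)]
    using x y lw lv s_polyR by (intro over_sI Fit_add act_Fit br_in_Fit) auto
qed

lemma embed_inj:
  assumes "over_s x" "over_s y" "embed x = embed y"
  shows "x = y"
proof -
  from assms(1) obtain v u where x: "x = (v, fr u s)" "Poly_Mapping.keys v \<subseteq> Lam" "u \<in> FitA"
    by (rule over_sE)
  from assms(2) obtain w u' where y: "y = (w, fr u' s)" "Poly_Mapping.keys w \<subseteq> Lam" "u' \<in> FitA"
    by (rule over_sE)
  have embed_eq: "zs v + shift (zs v) + u = zs w + shift (zs w) + u'"
    using assms(3) unfolding x(1) y(1) embed_frac[OF x(3)] embed_frac[OF y(3)] .
  then have "zs (v - w) = (shift (zs w) + u') - (shift (zs v) + u)"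
    unfolding zsum_diff by (simp add: algebra_simps)
  moreover have "(shift (zs w) + u') - (shift (zs v) + u) \<in> FitA"
    using x y by (intro Fit_diff Fit_add shift_Fit)
  moreover have "Poly_Mapping.keys (v - w) \<subseteq> Lam"
    using keys_diff[of v w] x y by auto
  ultimately have "v - w = 0"
    using is_fit_basis unfolding fit_basis_def by auto
  with embed_eq x y show "x = y" by simp
qed

lemma embed_AD_add:
  assumes "over_s x" "over_s y"
  shows "embed (AD_add scale br Lam act x y) = embed x + embed y"
proof -
  from assms(1) obtain v u where x: "x = (v, fr u s)" "u \<in> FitA" by (rule over_sE)
  from assms(2) obtain w u' where y: "y = (w, fr u' s)" "u' \<in> FitA" by (rule over_sE)
  show ?thesis
    unfolding x(1) y(1) AD_add_over_s[OF x(2) y(2)] embed_frac[OF Fit_add[OF x(2) y(2)]]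
      embed_frac[OF x(2)] embed_frac[OF y(2)]
    by (simp add: zsum_add shift_add algebra_simps)
qed

lemma embed_AD_scale:
  assumes "over_s x"
  shows "embed (AD_scale scale br Lam act c x) = scale c (embed x)"
proof -
  from assms obtain v u where x: "x = (v, fr u s)" "u \<in> FitA" by (rule over_sE)
  show ?thesis
    unfolding x(1) AD_scale_over_s[OF x(2)] embed_frac[OF Fit_scale[OF x(2)]] embed_frac[OF x(2)]
    by (simp add: zsum_map_mult shift_scale vs.scale_right_distrib)
qed

lemma embed_AD_br:
  assumes "over_s x" "over_s y"
  shows "embed (AD_br scale br Lam z act x y) = br (embed x) (embed y)"
proof -
  from assms(1) obtain v u where x: "x = (v, fr u s)" "Poly_Mapping.keys v \<subseteq> Lam" "u \<in> FitA"
    by (rule over_sE)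
  from assms(2) obtain w u' where y: "y = (w, fr u' s)" "Poly_Mapping.keys w \<subseteq> Lam" "u' \<in> FitA"
    by (rule over_sE)
  have in_Fit: "act s (br (zs v) (zs w)) + (act (lin w) u + act (- lin v) u') \<in> FitA"
    using x y lin_polyR[OF x(2)] lin_polyR[OF y(2)] s_polyR
    by (intro Fit_add act_Fit br_in_Fit polyR_uminus) auto
  show ?thesis
    unfolding x(1) y(1) AD_br_over_s[OF x(2) y(2) x(3) y(3)] embed_frac[OF in_Fit]
      embed_frac[OF x(3)] embed_frac[OF y(3)]
    using embed_br_identity[OF x(2) y(2) x(3) y(3)] by simp
qed

lemma AD_embeds_gen:
  assumes "\<forall>g\<in>G. over_s g"
  shows "AD_embeds scale br Lam z act (AD_gen scale br Lam z act G)"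
  unfolding AD_embeds_def
  using AD_gen_over_s[OF assms] embed_inj embed_AD_add embed_AD_scale embed_AD_br
  by (intro exI[of _ embed] conjI inj_onI ballI allI) auto

end

context metabelian_U_algebra
begin

lemma AD_carrierE:
  assumes "g \<in> AD_carrier scale br Lam act"
  obtains u t where "Poly_Mapping.keys (fst g) \<subseteq> Lam" "u \<in> FitA" "t \<in> multS Lam" "snd g = fr u t"
  using assms unfolding AD_carrier_def FitD_def by (auto simp: mem_Times_iff)

lemma exists_unit_denominator:
  assumes "finite G" "G \<subseteq> AD_carrier scale br Lam act"
  obtains s Fs r where "unit_denominator scale br Lam z act s Fs r"
    and "\<forall>g\<in>G. Poly_Mapping.keys (fst g) \<subseteq> Lam \<and> (\<exists>u\<in>FitA. snd g = fr u s)"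
proof -
  have "\<exists>u t. u \<in> FitA \<and> t \<in> multS Lam \<and> snd g = fr u t" if "g \<in> G" for g
  proof -
    from that assms(2) have "g \<in> AD_carrier scale br Lam act" by blast
    then obtain u t where "u \<in> FitA" "t \<in> multS Lam" "snd g = fr u t" by (rule AD_carrierE)
    then show ?thesis by blast
  qed
  then obtain t where t: "t \<in> multS Lam" "\<forall>g\<in>G. \<exists>u\<in>FitA. snd g = fr u t"
    using common_denominator[OF assms(1)] by auto
  obtain c Fs r where c: "c \<noteq> 0" and Fs: "Fs \<subseteq> Lam" "\<forall>\<alpha>\<in>Fs. r \<alpha> \<in> polyR Lam"
    and expansion: "Const c * t = 1 + (\<Sum>\<alpha>\<in>Fs. r \<alpha> * Var \<alpha>)"
    using multS_normalize[OF t(1)] .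
  have "unit_denominator scale br Lam z act (Const c * t) Fs r"
    using multS_Const_mult[OF c t(1)] Fs expansion by unfold_locales auto
  moreover have "\<exists>u\<in>FitA. snd g = fr u (Const c * t)" if "g \<in> G" for g
    using t(2) that c frac_rescale_Const[OF _ t(1) c] by (blast intro: Fit_scale)
  moreover have "Poly_Mapping.keys (fst g) \<subseteq> Lam" if "g \<in> G" for g
    using assms(2) that AD_carrierE by blast
  ultimately show thesis using that by blast
qed

end

theorem lemma4p2p1:
  fixes scale :: "'k::field \<Rightarrow> 'a::ab_group_add \<Rightarrow> 'a"
    and br :: "'a \<Rightarrow> 'a \<Rightarrow> 'a"
    and Lam :: "'l set"
    and z :: "'l \<Rightarrow> 'a"
    and act :: "('l, 'k) mpoly \<Rightarrow> 'a \<Rightarrow> 'a"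
    and B :: "(('l \<Rightarrow>\<^sub>0 'k) \<times> ('a \<times> ('l, 'k) mpoly) set) set"
  assumes "U_algebra scale br Lam z act"
    and "AD_fg_subalgebra scale br Lam z act B"
  shows "AD_embeds scale br Lam z act B"
proof -
  interpret metabelian_U_algebra scale br Lam z act
    by unfold_locales (rule assms(1))
  obtain G where G: "finite G" "G \<subseteq> AD_carrier scale br Lam act" "B = AD_gen scale br Lam z act G"
    using assms(2) unfolding AD_fg_subalgebra_def by blast
  obtain s Fs r where unit: "unit_denominator scale br Lam z act s Fs r"
    and generators: "\<forall>g\<in>G. Poly_Mapping.keys (fst g) \<subseteq> Lam \<and> (\<exists>u\<in>FitA. snd g = fr u s)"
    using exists_unit_denominator[OF G(1,2)] .
  interpret unit_denominator scale br Lam z act s Fs r by (rule unit)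
  show ?thesis
    unfolding G(3) by (rule AD_embeds_gen) (use generators in \<open>simp add: over_s_def\<close>)
qed

end
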